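(* Let $q:=\frac{y_0^2(1-\beta)^2}{\nu^2x_0^{2(1-\beta)}}$. (i) If $q>1$, or $q=1$ and $\frac23\le\beta<1$, then the sequence $(\mathbb{P}_\infty^{(n)})_{n\ge0}$ diverges. (ii) If $q<1$, or $q=1$ and $0\le\beta<\frac23$, then as $n\to\infty$, $$\mathbb{P}_\infty=\mathbb{P}_\infty^{(n)}+\mathcal{O}\!\left(n^{-1+\frac{\beta}{2-2\beta}}\exp\!\big(-n\log(1/q)\big)\right).$$
   Context: Parameters $x_0,y_0,\nu>0$, $\beta\in[0,1)$. $\Gamma(v,x):=\Gamma(v)^{-1}\int_0^xu^{v-1}e^{-u}\,\mathrm{d}u$. $\mathbb{P}_\infty:=\frac{y_0}{\nu\sqrt{2\pi}}\int_0^\infty\left[1-\Gamma\!\left(\frac{1}{2(1-\beta)},\frac{x_0^{2(1-\beta)}}{2r(1-\beta)^2}\right)\right]r^{-3/2}\exp\!\left(-\frac{y_0^2}{2\nu^2r}\right)\mathrm{d}r$ (the large-time mass at zero of the uncorrelated SABR model), and for $n\ge0$, $\mathbb{P}_\infty^{(n)}:=\int_0^\infty\left[1-\Gamma\!\left(\frac{1}{2(1-\beta)},\frac{x_0^{2(1-\beta)}}{2r(1-\beta)^2}\right)\right]\frac{y_0}{\nu r^{3/2}\sqrt{2\pi}}\sum_{k=0}^n\frac{1}{k!}\left(-\frac{y_0^2}{2\nu^2r}\right)^k\mathrm{d}r$, equivalently $\mathbb{P}_\infty^{(n)}=\sum_{k=0}^n(-1)^kb_k$ with $b_k:=\frac{2y_0(1-\beta)}{\Gamma(\frac{1}{2(1-\beta)})\nu\sqrt{\pi}x_0^{1-\beta}}q^k\frac{\Gamma(k+1+\frac{\beta}{2-2\beta})}{k!(1+2k)}$.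 *)

theory Defs
  imports "HOL-Analysis.Analysis" "HOL-Library.Landau_Symbols"
begin

definition reg_lower_gamma :: "real \<Rightarrow> real \<Rightarrow> real" where
  "reg_lower_gamma v x = (LBINT u:{0..x}. u powr (v - 1) * exp (- u)) / Gamma v"

definition sabr_tail :: "real \<Rightarrow> real \<Rightarrow> real \<Rightarrow> real" where
  "sabr_tail x0 \<beta> r =
     1 - reg_lower_gamma (1 / (2 * (1 - \<beta>))) (x0 powr (2 * (1 - \<beta>)) / (2 * r * (1 - \<beta>)\<^sup>2))"

definition P_inf :: "real \<Rightarrow> real \<Rightarrow> real \<Rightarrow> real \<Rightarrow> real" where
  "P_inf x0 y0 \<nu> \<beta> =
     y0 / (\<nu> * sqrt (2 * pi)) *
     (LBINT r:{0<..}. sabr_tail x0 \<beta> r * r powr (-3/2) * exp (- (y0\<^sup>2 / (2 * \<nu>\<^sup>2 * r))))"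

definition P_inf_n :: "real \<Rightarrow> real \<Rightarrow> real \<Rightarrow> real \<Rightarrow> nat \<Rightarrow> real" where
  "P_inf_n x0 y0 \<nu> \<beta> n =
     (LBINT r:{0<..}. sabr_tail x0 \<beta> r * (y0 / (\<nu> * r powr (3/2) * sqrt (2 * pi))) *
        (\<Sum>k\<le>n. (1 / fact k) * (- (y0\<^sup>2 / (2 * \<nu>\<^sup>2 * r))) ^ k))"

end

theory Submission
  imports Defs "HOL-Real_Asymp.Real_Asymp"
begin

text \<open>
  Put v = 1 / (2 (1 - \<beta>)), A = x0^(2 (1 - \<beta>)) / (2 (1 - \<beta>)^2) and c = y0^2 / (2 \<nu>^2), so
  that q = c / A and the tail factor of both integrands is the regularised upper incomplete
  gamma function Q(v, A / r). By Tonelli,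
    integral over (0, \<infinity>) of Q(v, A / r) r^(-p) dr = \<Gamma>(v + p - 1) / (\<Gamma>(v) (p - 1) A^(p - 1))
  for p > 1, so integrating the truncated exponential series termwise exhibits P_inf_n n as the
  partial sums of a series whose k-th term has modulus a constant times
  q^k \<Gamma>(v + 1/2 + k) / (k! (k + 1/2)). Since \<Gamma>(z + k) / k! \<sim> k^(z - 1), this is asymptotic
  to a multiple of k^(v - 3/2) q^k, so in case (i) the terms do not tend to zero. The Lagrange
  remainder of exp(-x) bounds |P_inf - P_inf_n n| by the modulus of the first omitted term,
  which gives (ii).
\<close>

lemma set_integral_nonneg:
  fixes f :: "'a \<Rightarrow> real"
  assumes "\<And>x. x \<in> S \<Longrightarrow> 0 \<le> f x"
  shows "0 \<le> (LINT x:S|M. f x)"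
  unfolding set_lebesgue_integral_def
  by (intro integral_nonneg_AE) (auto simp: indicator_def assms)

lemma set_integral_eq_of_nn_integral:
  fixes f :: "'a \<Rightarrow> real"
  assumes [measurable]: "f \<in> borel_measurable M" "S \<in> sets M"
    and nonneg: "\<And>x. x \<in> S \<Longrightarrow> 0 \<le> f x" and "0 \<le> V"
    and nn: "(\<integral>\<^sup>+x. indicator S x * ennreal (f x) \<partial>M) = ennreal V"
  shows "set_integrable M S f" and "(LINT x:S|M. f x) = V"
proof -
  have nn': "(\<integral>\<^sup>+x. ennreal (indicator S x * f x) \<partial>M) = ennreal V"
    using nn by (intro trans[OF nn_integral_cong nn]) (auto simp: indicator_def)
  have int: "integrable M (\<lambda>x. indicator S x * f x)"
    by (rule integrableI_nn_integral_finite[OF _ _ nn']) (auto simp: indicator_def nonneg)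
  then show "set_integrable M S f"
    by (simp add: set_integrable_def)
  have "ennreal (LINT x:S|M. f x) = ennreal V"
    using nn_integral_eq_integral[OF int] nn'
    by (auto simp: set_lebesgue_integral_def indicator_def nonneg)
  then show "(LINT x:S|M. f x) = V"
    using \<open>0 \<le> V\<close> set_integral_nonneg[of S f M] nonneg by simp
qed

lemma nn_integral_eq_set_integral:
  fixes f :: "'a \<Rightarrow> real"
  assumes "set_integrable M S f" "\<And>x. x \<in> S \<Longrightarrow> 0 \<le> f x"
  shows "(\<integral>\<^sup>+x. indicator S x * ennreal (f x) \<partial>M) = ennreal (LINT x:S|M. f x)"
proof -
  have "(\<integral>\<^sup>+x. indicator S x * ennreal (f x) \<partial>M)
      = (\<integral>\<^sup>+x. ennreal (indicator S x *\<^sub>R f x) \<partial>M)"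
    by (intro nn_integral_cong) (auto simp: indicator_def)
  also have "\<dots> = ennreal (LINT x:S|M. f x)"
    using assms unfolding set_integrable_def set_lebesgue_integral_def
    by (intro nn_integral_eq_integral) (auto simp: indicator_def)
  finally show ?thesis .
qed

lemma set_integrable_sum:
  fixes f :: "'i \<Rightarrow> 'a \<Rightarrow> real"
  assumes "\<And>i. i \<in> I \<Longrightarrow> set_integrable M S (f i)"
  shows "set_integrable M S (\<lambda>x. \<Sum>i\<in>I. f i x)"
  using assms unfolding set_integrable_def by (simp add: sum_distrib_left)

lemma set_integral_sum:
  fixes f :: "'i \<Rightarrow> 'a \<Rightarrow> real"
  assumes "\<And>i. i \<in> I \<Longrightarrow> set_integrable M S (f i)"
  shows "(LINT x:S|M. \<Sum>i\<in>I. f i x) = (\<Sum>i\<in>I. LINT x:S|M. f i x)"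
  using assms unfolding set_integrable_def set_lebesgue_integral_def
  by (simp add: sum_distrib_left Bochner_Integration.integral_sum)

lemma nn_integral_powr_Ioi:
  assumes "b > 0" "p > 1"
  shows "(\<integral>\<^sup>+r. indicator {b<..} r * ennreal (r powr (-p)) \<partial>lborel) = ennreal (b powr (1-p) / (p-1))"
proof -
  have "((\<lambda>x. x powr (-p)) has_integral b powr (1-p) / (p-1)) {b..}"
    using has_integral_powr_to_inf[of "-p" b] assms by (simp add: minus_divide_right)
  then have "(\<integral>\<^sup>+r. ennreal (indicator {b..} r * r powr (-p)) \<partial>lborel) = ennreal (b powr (1-p) / (p-1))"
    by (rule nn_integral_has_integral_lebesgue[rotated]) simp
  moreover have "(\<integral>\<^sup>+r. indicator {b<..} r * ennreal (r powr (-p)) \<partial>lborel)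
      = (\<integral>\<^sup>+r. ennreal (indicator {b..} r * r powr (-p)) \<partial>lborel)"
    by (intro nn_integral_cong_AE eventually_mono[OF AE_lborel_singleton[of b]])
       (auto simp: indicator_def)
  ultimately show ?thesis by simp
qed

section \<open>The regularised upper incomplete gamma function\<close>

definition Gamma_integrand :: "real \<Rightarrow> real \<Rightarrow> real" where
  "Gamma_integrand v u = u powr (v - 1) * exp (- u)"

lemma Gamma_integrand_nonneg: "0 \<le> Gamma_integrand v u"
  by (simp add: Gamma_integrand_def)

lemma borel_measurable_Gamma_integrand [measurable]: "Gamma_integrand v \<in> borel_measurable borel"
  unfolding Gamma_integrand_def by measurable

lemma set_integral_Gamma_integrand:
  assumes "v > 0"
  shows "set_integrable lborel {0..} (Gamma_integrand v)" and "(LBINT u:{0..}. Gamma_integrand v u) = Gamma v"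
proof -
  have "ennreal (Gamma v) = (\<integral>\<^sup>+t. ennreal (indicator {0..} t * t powr (v - 1) / exp t) \<partial>lborel)"
    using Gamma_conv_nn_integral_real[OF assms] by simp
  also have "\<dots> = (\<integral>\<^sup>+u. indicator {0..} u * ennreal (Gamma_integrand v u) \<partial>lborel)"
    by (intro nn_integral_cong) (auto simp: indicator_def Gamma_integrand_def exp_minus field_simps)
  finally have nn: "(\<integral>\<^sup>+u. indicator {0..} u * ennreal (Gamma_integrand v u) \<partial>lborel) = ennreal (Gamma v)" ..
  have "0 \<le> Gamma v"
    using assms by (simp add: Gamma_real_pos less_imp_le)
  with nn show "set_integrable lborel {0..} (Gamma_integrand v)" "(LBINT u:{0..}. Gamma_integrand v u) = Gamma v"
    by (auto intro: set_integral_eq_of_nn_integral simp: Gamma_integrand_nonneg)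
qed

definition reg_upper_gamma :: "real \<Rightarrow> real \<Rightarrow> real" where
  "reg_upper_gamma v x = 1 - reg_lower_gamma v x"

lemma borel_measurable_reg_lower_gamma [measurable]: "reg_lower_gamma v \<in> borel_measurable borel"
proof -
  have "(\<lambda>(x, u). of_bool (0 \<le> u \<and> u \<le> x) * (u powr (v - 1) * exp (- u)) :: real)
      \<in> borel_measurable (borel \<Otimes>\<^sub>M lborel)"
    by (subst measurable_cong_sets[OF sets_pair_measure_cong[OF refl sets_lborel] refl]) measurable
  then have "(\<lambda>(x, u). indicator {0..x} u * Gamma_integrand v u) \<in> borel_measurable (borel \<Otimes>\<^sub>M lborel)"
    by (simp add: indicator_def Gamma_integrand_def case_prod_unfold)
  from lborel.borel_measurable_lebesgue_integral[OF this]
  have "(\<lambda>x. LBINT u:{0..x}. u powr (v - 1) * exp (- u)) \<in> borel_measurable borel"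
    by (simp add: set_lebesgue_integral_def Gamma_integrand_def)
  then show ?thesis
    unfolding reg_lower_gamma_def[abs_def] by (intro borel_measurable_divide) simp_all
qed

lemma reg_upper_gamma_eq_set_integral:
  assumes "v > 0" "x \<ge> 0"
  shows "set_integrable lborel {x<..} (Gamma_integrand v)"
    and "Gamma v * reg_upper_gamma v x = (LBINT u:{x<..}. Gamma_integrand v u)"
proof -
  show int_Ioi: "set_integrable lborel {x<..} (Gamma_integrand v)"
    by (rule set_integrable_subset[OF set_integral_Gamma_integrand(1)]) (use assms in auto)
  have int_Icc: "set_integrable lborel {0..x} (Gamma_integrand v)"
    by (rule set_integrable_subset[OF set_integral_Gamma_integrand(1)]) (use assms in auto)
  have "{0..x} \<union> {x<..} = {0..}" "{0..x} \<inter> {x<..} = {}"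
    using assms by auto
  then have "Gamma v = (LBINT u:{0..x}. Gamma_integrand v u) + (LBINT u:{x<..}. Gamma_integrand v u)"
    using set_integral_Un[OF _ int_Icc int_Ioi] set_integral_Gamma_integrand(2)[OF assms(1)] by simp
  then show "Gamma v * reg_upper_gamma v x = (LBINT u:{x<..}. Gamma_integrand v u)"
    using Gamma_real_pos[OF assms(1)]
    by (simp add: reg_upper_gamma_def reg_lower_gamma_def Gamma_integrand_def field_simps)
qed

lemma reg_upper_gamma_nonneg:
  assumes "v > 0" "x \<ge> 0"
  shows "0 \<le> reg_upper_gamma v x"
proof -
  have "0 \<le> Gamma v * reg_upper_gamma v x"
    by (simp add: reg_upper_gamma_eq_set_integral[OF assms] set_integral_nonneg Gamma_integrand_nonneg)
  then show ?thesis
    using Gamma_real_pos[OF assms(1)] by (simp add: zero_le_mult_iff)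
qed

text \<open>The two iterated integrals of \<open>Gamma_integrand v u * r powr (-p)\<close> over the region
  \<open>{(r, u). 0 < r \<and> A < r u}\<close>; Tonelli equates them.\<close>

lemma nn_integral_hyperbolic_region_in_u:
  assumes v: "v > 0" and A: "A > 0"
  shows "(\<integral>\<^sup>+u. ennreal (of_bool (0 < r \<and> A < r * u) * Gamma_integrand v u * r powr (-p)) \<partial>lborel)
    = indicator {0<..} r * ennreal (Gamma v * reg_upper_gamma v (A / r) * r powr (-p))"
proof (cases "r > 0")
  case True
  have "(\<integral>\<^sup>+u. ennreal (of_bool (0 < r \<and> A < r * u) * Gamma_integrand v u * r powr (-p)) \<partial>lborel)
      = (\<integral>\<^sup>+u. ennreal (r powr (-p)) * (indicator {A/r<..} u * ennreal (Gamma_integrand v u)) \<partial>lborel)"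
    using True by (intro nn_integral_cong) (auto simp: indicator_def field_simps ennreal_mult Gamma_integrand_nonneg)
  also have "\<dots> = ennreal (r powr (-p)) * ennreal (LBINT u:{A/r<..}. Gamma_integrand v u)"
    using True v A
    by (simp add: nn_integral_cmult nn_integral_eq_set_integral reg_upper_gamma_eq_set_integral Gamma_integrand_nonneg)
  finally show ?thesis
    using True v A reg_upper_gamma_eq_set_integral(2)[of v "A/r"]
    by (simp add: ennreal_mult'[symmetric] mult_ac set_integral_nonneg Gamma_integrand_nonneg)
qed simp

lemma nn_integral_hyperbolic_region_in_r:
  assumes A: "A > 0" and p: "p > 1"
  shows "(\<integral>\<^sup>+r. ennreal (of_bool (0 < r \<and> A < r * u) * Gamma_integrand v u * r powr (-p)) \<partial>lborel)
    = ennreal (A powr (1 - p) / (p - 1)) * (indicator {0..} u * ennreal (Gamma_integrand (v + p - 1) u))"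
proof (cases "u > 0")
  case True
  have "(0 < r \<and> A < r * u) \<longleftrightarrow> A / u < r" for r
    using True A by (auto simp: field_simps intro: less_trans[OF divide_pos_pos[OF A True]])
  then have "(\<integral>\<^sup>+r. ennreal (of_bool (0 < r \<and> A < r * u) * Gamma_integrand v u * r powr (-p)) \<partial>lborel)
      = (\<integral>\<^sup>+r. ennreal (Gamma_integrand v u) * (indicator {A/u<..} r * ennreal (r powr (-p))) \<partial>lborel)"
    by (intro nn_integral_cong) (auto simp: indicator_def ennreal_mult' Gamma_integrand_nonneg)
  also have "\<dots> = ennreal (Gamma_integrand v u * ((A/u) powr (1 - p) / (p - 1)))"
    using True A p
    by (simp add: nn_integral_cmult nn_integral_powr_Ioi Gamma_integrand_nonneg flip: ennreal_mult')
  also have "Gamma_integrand v u * ((A/u) powr (1 - p) / (p - 1))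
      = A powr (1 - p) / (p - 1) * Gamma_integrand (v + p - 1) u"
    using True A p
    by (simp add: Gamma_integrand_def powr_divide powr_diff powr_add powr_minus field_simps power2_eq_square)
  finally show ?thesis
    using True p A by (simp add: ennreal_mult'[symmetric] Gamma_integrand_nonneg)
next
  case False
  then have "\<not> (0 < r \<and> A < r * u)" for r
    using A mult_nonneg_nonpos[of r u] by auto
  then have zero: "(\<lambda>r. ennreal (of_bool (0 < r \<and> A < r * u) * Gamma_integrand v u * r powr (-p))) = (\<lambda>r. 0)"
    by (intro ext) auto
  show ?thesis
    unfolding zero using False by (auto simp: Gamma_integrand_def indicator_def)
qed

lemma nn_integral_reg_upper_gamma_mult_powr:
  assumes v: "v > 0" and A: "A > 0" and p: "p > 1"
  shows "(\<integral>\<^sup>+r. indicator {0<..} r * ennreal (Gamma v * reg_upper_gamma v (A / r) * r powr (-p)) \<partial>lborel)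
       = ennreal (A powr (1 - p) / (p - 1) * Gamma (v + p - 1))"
proof -
  define F where "F r u = ennreal (of_bool (0 < r \<and> A < r * u) * Gamma_integrand v u * r powr (-p))" for r u
  have F_measurable: "case_prod F \<in> borel_measurable (lborel \<Otimes>\<^sub>M lborel)"
    unfolding F_def Gamma_integrand_def
    by (subst measurable_cong_sets[OF sets_pair_measure_cong[OF sets_lborel sets_lborel] refl]) measurable
  have "(\<integral>\<^sup>+r. indicator {0<..} r * ennreal (Gamma v * reg_upper_gamma v (A / r) * r powr (-p)) \<partial>lborel)
      = (\<integral>\<^sup>+r. \<integral>\<^sup>+u. F r u \<partial>lborel \<partial>lborel)"
    by (simp add: F_def nn_integral_hyperbolic_region_in_u[OF v A])
  also have "\<dots> = (\<integral>\<^sup>+u. \<integral>\<^sup>+r. F r u \<partial>lborel \<partial>lborel)"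
    by (rule lborel_pair.Fubini'[OF F_measurable, symmetric])
  also have "\<dots> = ennreal (A powr (1 - p) / (p - 1)) * ennreal (Gamma (v + p - 1))"
    using v p
    by (simp add: F_def nn_integral_hyperbolic_region_in_r[OF A p] nn_integral_cmult
        nn_integral_eq_set_integral set_integral_Gamma_integrand Gamma_integrand_nonneg)
  finally show ?thesis
    using A p v by (simp add: ennreal_mult'[symmetric])
qed

lemma set_integral_reg_upper_gamma_mult_powr:
  assumes v: "v > 0" and A: "A > 0" and p: "p > 1"
  shows "set_integrable lborel {0<..} (\<lambda>r. reg_upper_gamma v (A / r) * r powr (-p))"
    and "(LBINT r:{0<..}. reg_upper_gamma v (A / r) * r powr (-p))
           = Gamma (v + p - 1) / (Gamma v * (p - 1) * A powr (p - 1))"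
proof -
  have nonneg: "0 \<le> Gamma v * reg_upper_gamma v (A / r) * r powr (-p)" if "r \<in> {0<..}" for r
    using that v A by (simp add: reg_upper_gamma_nonneg)
  have "(\<lambda>r. Gamma v * reg_upper_gamma v (A / r) * r powr (-p)) \<in> borel_measurable lborel"
    unfolding reg_upper_gamma_def by measurable
  note * = set_integral_eq_of_nn_integral[OF this _ nonneg _ nn_integral_reg_upper_gamma_mult_powr[OF assms]]
  have G: "Gamma v \<noteq> 0"
    using Gamma_real_pos[OF v] by simp
  show "set_integrable lborel {0<..} (\<lambda>r. reg_upper_gamma v (A / r) * r powr (-p))"
    using *(1) A p v G by (simp add: mult.assoc)
  show "(LBINT r:{0<..}. reg_upper_gamma v (A / r) * r powr (-p))
           = Gamma (v + p - 1) / (Gamma v * (p - 1) * A powr (p - 1))"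
    using *(2) A p v G by (simp add: mult.assoc powr_diff field_simps)
qed

section \<open>The truncated series\<close>

lemma exp_minus_Taylor_remainder:
  fixes x :: real
  assumes "x \<ge> 0"
  shows "\<bar>exp (- x) - (\<Sum>k\<le>n. (- x) ^ k / fact k)\<bar> \<le> x ^ Suc n / fact (Suc n)"
proof (cases "x = 0")
  case True
  then show ?thesis
    by (simp add: power_0_left sum.atMost_shift)
next
  case False
  then have "- x < 0"
    using assms by simp
  then obtain t where t: "- x < t" "t < 0"
    and exp_eq: "exp (- x) = (\<Sum>k<Suc n. exp 0 / fact k * (- x) ^ k) + exp t / fact (Suc n) * (- x) ^ Suc n"
    using Maclaurin_minus[of "- x" "Suc n" "\<lambda>_. exp" exp] by (auto intro: DERIV_exp)
  have "\<bar>exp t / fact (Suc n) * (- x) ^ Suc n\<bar> = exp t * (x ^ Suc n / fact (Suc n))"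
    using assms by (simp add: abs_mult power_abs)
  also have "\<dots> \<le> x ^ Suc n / fact (Suc n)"
    using t assms by (intro mult_left_le_one_le) auto
  finally show ?thesis
    using exp_eq by (simp add: lessThan_Suc_atMost)
qed

definition mass_at_zero :: "real \<Rightarrow> real \<Rightarrow> real \<Rightarrow> real" where
  "mass_at_zero v A c = (LBINT r:{0<..}. reg_upper_gamma v (A / r) * r powr (-3/2) * exp (- (c / r)))"

definition mass_at_zero_approx :: "real \<Rightarrow> real \<Rightarrow> real \<Rightarrow> nat \<Rightarrow> real" where
  "mass_at_zero_approx v A c n =
     (LBINT r:{0<..}. reg_upper_gamma v (A / r) * r powr (-3/2) * (\<Sum>k\<le>n. (- (c / r)) ^ k / fact k))"

text \<open>Multiplied by \<open>y0 / (\<nu> sqrt (2 \<pi>))\<close>, \<open>mass_at_zero_term v A c k\<close> is the paper's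
  \<open>(-1)\<^sup>k b\<^sub>k\<close>.\<close>

definition mass_at_zero_term :: "real \<Rightarrow> real \<Rightarrow> real \<Rightarrow> nat \<Rightarrow> real" where
  "mass_at_zero_term v A c k =
     (- c) ^ k / fact k * Gamma (v + k + 1/2) / (Gamma v * (k + 1/2) * A powr (k + 1/2))"

lemma mass_at_zero_term_eq_set_integral:
  assumes "v > 0" "A > 0"
  shows "mass_at_zero_term v A c k
    = (- c) ^ k / fact k * (LBINT r:{0<..}. reg_upper_gamma v (A / r) * r powr (- (k + 3/2)))"
proof -
  have "real k + 3/2 > 1" by simp
  from set_integral_reg_upper_gamma_mult_powr(2)[OF assms this] show ?thesis
    by (simp add: mass_at_zero_term_def add_ac)
qed

lemma powr_minus_three_halves_mult_power:
  fixes r :: real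
  assumes "r > 0"
  shows "r powr (-3/2) * ((a / r) ^ k / fact k) = a ^ k / fact k * r powr (- (k + 3/2))"
proof -
  have "r powr (- (k + 3/2)) = inverse (r ^ k * r powr (3/2))"
    using assms by (simp only: powr_minus powr_add powr_realpow)
  also have "\<dots> = r powr (-3/2) / r ^ k"
    using assms by (simp add: powr_minus_divide field_simps)
  finally have "r powr (- (k + 3/2)) = r powr (-3/2) / r ^ k" .
  moreover have "(a / r) ^ k = a ^ k / r ^ k"
    by (rule power_divide)
  ultimately show ?thesis
    by (simp add: field_simps)
qed

lemma mass_at_zero_approx_integrand_eq:
  assumes "r > 0"
  shows "reg_upper_gamma v (A / r) * r powr (-3/2) * (\<Sum>k\<le>n. (- (c / r)) ^ k / fact k)
      = (\<Sum>k\<le>n. (- c) ^ k / fact k * (reg_upper_gamma v (A / r) * r powr (- (k + 3/2))))"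
proof -
  have "reg_upper_gamma v (A / r) * r powr (-3/2) * (\<Sum>k\<le>n. (- (c / r)) ^ k / fact k)
      = reg_upper_gamma v (A / r) * (\<Sum>k\<le>n. r powr (-3/2) * ((- (c / r)) ^ k / fact k))"
    by (simp only: sum_distrib_left mult.assoc)
  also have "\<dots> = reg_upper_gamma v (A / r) * (\<Sum>k\<le>n. (- c) ^ k / fact k * r powr (- (k + 3/2)))"
    using assms by (simp only: minus_divide_left powr_minus_three_halves_mult_power)
  finally show ?thesis
    by (simp only: sum_distrib_left mult.left_commute)
qed

lemma set_integrable_reg_upper_gamma_mult_powr_nat:
  fixes k :: nat
  assumes "v > 0" "A > 0"
  shows "set_integrable lborel {0<..} (\<lambda>r. reg_upper_gamma v (A / r) * r powr (- (k + 3/2)))"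
  using set_integral_reg_upper_gamma_mult_powr(1)[OF assms, of "k + 3/2"] by simp

lemma set_integrable_mass_at_zero_approx_integrand:
  assumes "v > 0" "A > 0"
  shows "set_integrable lborel {0<..}
    (\<lambda>r. reg_upper_gamma v (A / r) * r powr (-3/2) * (\<Sum>k\<le>n. (- (c / r)) ^ k / fact k))"
proof (subst set_integrable_cong[OF refl refl mass_at_zero_approx_integrand_eq])
  show "set_integrable lborel {0<..}
      (\<lambda>r. \<Sum>k\<le>n. (- c) ^ k / fact k * (reg_upper_gamma v (A / r) * r powr (- (k + 3/2))))"
    by (intro set_integrable_sum set_integrable_mult_right set_integrable_reg_upper_gamma_mult_powr_nat assms)
qed simp

lemma mass_at_zero_approx_eq_sum:
  assumes "v > 0" "A > 0"
  shows "mass_at_zero_approx v A c n = (\<Sum>k\<le>n. mass_at_zero_term v A c k)"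
proof -
  have "mass_at_zero_approx v A c n = (LBINT r:{0<..}. \<Sum>k\<le>n.
      (- c) ^ k / fact k * (reg_upper_gamma v (A / r) * r powr (- (k + 3/2))))"
    unfolding mass_at_zero_approx_def
    by (rule set_lebesgue_integral_cong) (simp, intro allI impI mass_at_zero_approx_integrand_eq, simp)
  also have "\<dots> = (\<Sum>k\<le>n. (- c) ^ k / fact k * (LBINT r:{0<..}. reg_upper_gamma v (A / r) * r powr (- (k + 3/2))))"
    by (subst set_integral_sum) (intro set_integrable_mult_right set_integrable_reg_upper_gamma_mult_powr_nat assms, simp)
  also have "\<dots> = (\<Sum>k\<le>n. mass_at_zero_term v A c k)"
    by (simp only: mass_at_zero_term_eq_set_integral[OF assms])
  finally show ?thesis .
qed

lemma set_integrable_mass_at_zero_integrand: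
  assumes v: "v > 0" and A: "A > 0" and c: "c \<ge> 0"
  shows "set_integrable lborel {0<..} (\<lambda>r. reg_upper_gamma v (A / r) * r powr (-3/2) * exp (- (c / r)))"
proof (rule set_integrable_bound)
  show "set_integrable lborel {0<..} (\<lambda>r. reg_upper_gamma v (A / r) * r powr (-3/2))"
    using set_integral_reg_upper_gamma_mult_powr(1)[OF v A, of "3/2"] by simp
  show "set_borel_measurable lborel {0<..} (\<lambda>r. reg_upper_gamma v (A / r) * r powr (-3/2) * exp (- (c / r)))"
    unfolding set_borel_measurable_def reg_upper_gamma_def by measurable
  show "AE r in lborel. r \<in> {0<..} \<longrightarrow> norm (reg_upper_gamma v (A / r) * r powr (-3/2) * exp (- (c / r)))
      \<le> norm (reg_upper_gamma v (A / r) * r powr (-3/2))"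
    using v A c by (intro AE_I2) (auto simp: abs_mult mult_left_le reg_upper_gamma_nonneg)
qed

lemma abs_mass_at_zero_integrand_sub_approx_le:
  assumes v: "v > 0" and A: "A > 0" and c: "c \<ge> 0" and r: "r > 0"
  shows "\<bar>reg_upper_gamma v (A / r) * r powr (-3/2) * (exp (- (c / r)) - (\<Sum>k\<le>n. (- (c / r)) ^ k / fact k))\<bar>
    \<le> c ^ Suc n / fact (Suc n) * (reg_upper_gamma v (A / r) * r powr (- (Suc n + 3/2)))"
proof -
  define Q where "Q = reg_upper_gamma v (A / r) * r powr (-3/2)"
  have "0 \<le> Q"
    using v A r by (simp add: Q_def reg_upper_gamma_nonneg)
  then have "\<bar>Q * (exp (- (c / r)) - (\<Sum>k\<le>n. (- (c / r)) ^ k / fact k))\<bar>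
      = Q * \<bar>exp (- (c / r)) - (\<Sum>k\<le>n. (- (c / r)) ^ k / fact k)\<bar>"
    by (simp only: abs_mult abs_of_nonneg)
  also have "\<dots> \<le> Q * ((c / r) ^ Suc n / fact (Suc n))"
    using c r \<open>0 \<le> Q\<close> by (intro mult_left_mono exp_minus_Taylor_remainder) auto
  also have "\<dots> = c ^ Suc n / fact (Suc n) * (reg_upper_gamma v (A / r) * r powr (- (Suc n + 3/2)))"
    using r unfolding Q_def mult.assoc by (simp only: powr_minus_three_halves_mult_power mult.left_commute)
  finally show ?thesis
    unfolding Q_def .
qed

lemma abs_mass_at_zero_sub_approx_le:
  assumes v: "v > 0" and A: "A > 0" and c: "c \<ge> 0"
  shows "\<bar>mass_at_zero v A c - mass_at_zero_approx v A c n\<bar> \<le> \<bar>mass_at_zero_term v A c (Suc n)\<bar>"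
proof -
  define f where "f r = reg_upper_gamma v (A / r) * r powr (-3/2) * (exp (- (c / r)) - (\<Sum>k\<le>n. (- (c / r)) ^ k / fact k))" for r
  have f_int: "set_integrable lborel {0<..} f"
    using set_integral_diff(1)[OF set_integrable_mass_at_zero_integrand[OF v A c]
        set_integrable_mass_at_zero_approx_integrand[OF v A]]
    by (simp add: f_def[abs_def] right_diff_distrib)
  have "\<bar>mass_at_zero v A c - mass_at_zero_approx v A c n\<bar> = \<bar>LBINT r:{0<..}. f r\<bar>"
    using set_integral_diff(2)[OF set_integrable_mass_at_zero_integrand[OF v A c]
        set_integrable_mass_at_zero_approx_integrand[OF v A]]
    by (simp add: mass_at_zero_def mass_at_zero_approx_def f_def right_diff_distrib)
  also have "\<dots> \<le> (LBINT r:{0<..}. \<bar>f r\<bar>)"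
    using set_integral_norm_bound[OF f_int] by simp
  also have "\<dots> \<le> (LBINT r:{0<..}. c ^ Suc n / fact (Suc n) * (reg_upper_gamma v (A / r) * r powr (- (Suc n + 3/2))))"
  proof (rule set_integral_mono)
    show "set_integrable lborel {0<..} (\<lambda>r. \<bar>f r\<bar>)"
      using set_integrable_abs[OF f_int] .
    show "set_integrable lborel {0<..}
        (\<lambda>r. c ^ Suc n / fact (Suc n) * (reg_upper_gamma v (A / r) * r powr (- (Suc n + 3/2))))"
      by (intro set_integrable_mult_right set_integrable_reg_upper_gamma_mult_powr_nat v A)
    show "\<bar>f r\<bar> \<le> c ^ Suc n / fact (Suc n) * (reg_upper_gamma v (A / r) * r powr (- (Suc n + 3/2)))"
      if "r \<in> {0<..}" for r
      using that unfolding f_def by (intro abs_mass_at_zero_integrand_sub_approx_le v A c) simp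
  qed
  also have "\<dots> = \<bar>mass_at_zero_term v A c (Suc n)\<bar>"
  proof -
    have "0 \<le> (LBINT r:{0<..}. reg_upper_gamma v (A / r) * r powr (- (Suc n + 3/2)))"
      using v A by (intro set_integral_nonneg) (simp add: reg_upper_gamma_nonneg)
    then show ?thesis
      using c by (simp add: mass_at_zero_term_eq_set_integral[OF v A] abs_mult power_abs)
  qed
  finally show ?thesis .
qed

section \<open>Asymptotics of the terms\<close>

lemma Gamma_add_nat_over_fact:
  fixes z :: real
  assumes z: "z > 0" and n: "n > 0"
  shows "Gamma (z + n) / fact n = Gamma z / Gamma_series z n * (real n powr z / (z + n))"
proof -
  have "z \<notin> \<int>\<^sub>\<le>\<^sub>0"
    using z by (auto elim!: nonpos_Ints_cases)
  then have Gamma_eq: "Gamma (z + n) = Gamma z * pochhammer z n"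
    using pochhammer_Gamma[of z n] Gamma_real_pos[OF z] by simp
  have series_eq: "Gamma_series z n = fact n * real n powr z / (pochhammer z n * (z + n))"
    unfolding Gamma_series_def pochhammer_Suc[of z n, unfolded Suc_eq_plus1] using n
    by (simp add: powr_def)
  have cancel: "a / (f * X / (P * s)) * (X / s) = a * P / f" if "X \<noteq> 0" "s \<noteq> 0"
    for a P f X s :: real
    using that by (simp add: field_simps)
  have "real n powr z \<noteq> 0" "z + n \<noteq> 0"
    using z n by auto
  then show ?thesis
    unfolding Gamma_eq series_eq by (subst cancel) simp_all
qed

lemma Gamma_add_nat_over_fact_asymp_equiv:
  fixes z :: real
  assumes "z > 0"
  shows "(\<lambda>n. Gamma (z + n) / fact n) \<sim>[sequentially] (\<lambda>n. real n powr (z - 1))"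
proof (rule asymp_equivI')
  have "Gamma z \<noteq> 0"
    using Gamma_real_pos[OF assms] by simp
  moreover have "(\<lambda>n. real n / (z + n)) \<longlonglongrightarrow> 1"
    by real_asymp
  ultimately have "(\<lambda>n. Gamma z / Gamma_series z n * (real n / (z + n))) \<longlonglongrightarrow> Gamma z / Gamma z * 1"
    by (intro tendsto_intros Gamma_series_LIMSEQ)
  moreover have "eventually (\<lambda>n. Gamma z / Gamma_series z n * (real n / (z + n))
      = Gamma (z + n) / fact n / real n powr (z - 1)) sequentially"
    using eventually_gt_at_top[of 0]
    by eventually_elim (use assms in \<open>simp add: Gamma_add_nat_over_fact powr_diff\<close>)
  ultimately show "(\<lambda>n. Gamma (z + n) / fact n / real n powr (z - 1)) \<longlonglongrightarrow> 1"
    using \<open>Gamma z \<noteq> 0\<close> by (simp add: tendsto_cong)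
qed

lemma abs_mass_at_zero_term:
  assumes v: "v > 0" and A: "A > 0" and c: "c \<ge> 0"
  shows "\<bar>mass_at_zero_term v A c k\<bar>
    = (c / A) ^ k / (Gamma v * sqrt A) * (Gamma (v + 1/2 + k) / fact k / (k + 1/2))"
proof -
  have "A powr (real k + 1/2) = A ^ k * sqrt A"
    using A by (simp add: powr_add powr_realpow powr_half_sqrt)
  moreover have "Gamma (v + k + 1/2) > 0" "Gamma v > 0"
    using v by simp_all
  ultimately show ?thesis
    using A c by (simp add: mass_at_zero_term_def abs_mult power_abs power_divide add_ac)
qed

lemma powr_minus_one_divide_self:
  fixes x a :: real
  assumes "x > 0"
  shows "x powr (a - 1) / x = x powr (a - 2)"
  using assms powr_diff[of x "a - 1" 1] by simp

lemma abs_mass_at_zero_term_asymp_equiv: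
  assumes v: "v > 0" and A: "A > 0" and c: "c > 0"
  shows "(\<lambda>k. \<bar>mass_at_zero_term v A c k\<bar>)
    \<sim>[sequentially] (\<lambda>k. 1 / (Gamma v * sqrt A) * (real k powr (v - 3/2) * (c / A) ^ k))"
proof -
  define C where "C = 1 / (Gamma v * sqrt A)"
  have abs_term: "(\<lambda>k. \<bar>mass_at_zero_term v A c k\<bar>)
      = (\<lambda>k. C * (c / A) ^ k * (Gamma (v + 1/2 + k) / fact k / (k + 1/2)))"
    using v A c by (simp add: abs_mass_at_zero_term C_def)
  have "(\<lambda>k. C * (c / A) ^ k * (Gamma (v + 1/2 + k) / fact k / (k + 1/2)))
      \<sim>[sequentially] (\<lambda>k. C * (c / A) ^ k * (real k powr (v + 1/2 - 1) / real k))"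
  proof (intro asymp_equiv_mult asymp_equiv_divide asymp_equiv_refl Gamma_add_nat_over_fact_asymp_equiv)
    show "(\<lambda>k. real k + 1/2) \<sim>[sequentially] real"
      by real_asymp
  qed (use v in simp)
  also have "(\<lambda>k. C * (c / A) ^ k * (real k powr (v + 1/2 - 1) / real k))
      \<sim>[sequentially] (\<lambda>k. C * (real k powr (v - 3/2) * (c / A) ^ k))"
  proof (intro asymp_equiv_refl_ev eventually_mono[OF eventually_gt_at_top[of 0]])
    fix k :: nat
    assume "k > 0"
    then show "C * (c / A) ^ k * (real k powr (v + 1/2 - 1) / real k) = C * (real k powr (v - 3/2) * (c / A) ^ k)"
      using powr_minus_one_divide_self[of "real k" "v + 1/2"] by (simp add: mult_ac)
  qed
  finally show ?thesis
    unfolding abs_term C_def .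
qed

lemma powr_mult_power_not_tendsto_zero:
  fixes a q :: real
  assumes "q > 1 \<or> (q = 1 \<and> a \<ge> 0)"
  shows "\<not> (\<lambda>n. real n powr a * q ^ n) \<longlonglongrightarrow> 0"
proof
  assume lim: "(\<lambda>n. real n powr a * q ^ n) \<longlonglongrightarrow> 0"
  have "eventually (\<lambda>n. real n powr a * q ^ n \<ge> 1) sequentially"
  proof (cases "q > 1")
    case True
    then have "filterlim (\<lambda>n. real n powr a * q ^ n) at_top sequentially"
      by real_asymp
    then show ?thesis
      by (simp add: filterlim_at_top)
  next
    case False
    with assms have "q = 1" "a \<ge> 0"
      by auto
    then have "real n powr a * q ^ n \<ge> 1" if "n \<ge> 1" for n
      using that by (auto intro: ge_one_powr_ge_zero)
    then show ?thesis
      by (blast intro: eventually_mono[OF eventually_ge_at_top[of 1]])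
  qed
  moreover have "eventually (\<lambda>n. real n powr a * q ^ n < 1) sequentially"
    using order_tendstoD(2)[OF lim, of 1] by simp
  ultimately have "eventually (\<lambda>n. False) sequentially"
    by eventually_elim simp
  then show False
    by simp
qed

lemma powr_mult_power_Suc_bigo:
  fixes a q :: real
  assumes "q > 0"
  shows "(\<lambda>n. real (Suc n) powr a * q ^ Suc n) \<in> O(\<lambda>n. real n powr a * q ^ n)"
proof -
  have "(\<lambda>n. real (Suc n) powr a) \<in> O(\<lambda>n. real n powr a)"
    by real_asymp
  then have "(\<lambda>n. q * (real (Suc n) powr a * q ^ n)) \<in> O(\<lambda>n. real n powr a * q ^ n)"
    using assms by (simp add: landau_o.big.mult_right)
  then show ?thesis
    by (simp add: mult_ac)
qed

lemma mass_at_zero_approx_not_convergent: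
  assumes v: "v > 0" and A: "A > 0" and c: "c > 0"
    and q: "c / A > 1 \<or> (c / A = 1 \<and> v \<ge> 3/2)"
  shows "\<not> convergent (mass_at_zero_approx v A c)"
proof
  assume "convergent (mass_at_zero_approx v A c)"
  moreover have "mass_at_zero_approx v A c = (\<lambda>n. \<Sum>k\<le>n. mass_at_zero_term v A c k)"
    using mass_at_zero_approx_eq_sum[OF v A] by auto
  ultimately have "summable (mass_at_zero_term v A c)"
    by (simp add: summable_iff_convergent')
  then have "(\<lambda>k. \<bar>mass_at_zero_term v A c k\<bar>) \<longlonglongrightarrow> 0"
    by (intro tendsto_rabs_zero summable_LIMSEQ_zero)
  then have "(\<lambda>k. Gamma v * sqrt A * (1 / (Gamma v * sqrt A) * (real k powr (v - 3/2) * (c / A) ^ k)))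
      \<longlonglongrightarrow> Gamma v * sqrt A * 0"
    by (intro tendsto_mult_left asymp_equiv_tendsto_transfer[OF abs_mass_at_zero_term_asymp_equiv[OF v A c]])
  then have "(\<lambda>k. real k powr (v - 3/2) * (c / A) ^ k) \<longlonglongrightarrow> 0"
    using A Gamma_real_pos[OF v] by simp
  with powr_mult_power_not_tendsto_zero q show False
    by auto
qed

lemma mass_at_zero_approx_error_bigo:
  assumes v: "v > 0" and A: "A > 0" and c: "c > 0"
  shows "(\<lambda>n. mass_at_zero v A c - mass_at_zero_approx v A c n)
    \<in> O(\<lambda>n. real n powr (v - 3/2) * (c / A) ^ n)"
proof -
  have "(\<lambda>n. mass_at_zero v A c - mass_at_zero_approx v A c n) \<in> O(\<lambda>n. \<bar>mass_at_zero_term v A c (Suc n)\<bar>)"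
    using abs_mass_at_zero_sub_approx_le[OF v A] c by (intro bigoI[where c = 1]) auto
  also have "(\<lambda>n. \<bar>mass_at_zero_term v A c (Suc n)\<bar>)
      \<in> O(\<lambda>n. 1 / (Gamma v * sqrt A) * (real (Suc n) powr (v - 3/2) * (c / A) ^ Suc n))"
    by (intro asymp_equiv_imp_bigo asymp_equiv_compose'[OF abs_mass_at_zero_term_asymp_equiv[OF v A c]]
        filterlim_Suc)
  also have "(\<lambda>n. 1 / (Gamma v * sqrt A) * (real (Suc n) powr (v - 3/2) * (c / A) ^ Suc n))
      \<in> O(\<lambda>n. real n powr (v - 3/2) * (c / A) ^ n)"
  proof (rule landau_o.big.cmult_in_iff[THEN iffD2])
    show "1 / (Gamma v * sqrt A) \<noteq> 0"
      using A Gamma_real_pos[OF v] by simp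
    show "(\<lambda>n. real (Suc n) powr (v - 3/2) * (c / A) ^ Suc n) \<in> O(\<lambda>n. real n powr (v - 3/2) * (c / A) ^ n)"
      using c A by (intro powr_mult_power_Suc_bigo) simp
  qed
  finally show ?thesis .
qed

section \<open>The mass at zero of the uncorrelated SABR model\<close>

lemma sabr_tail_eq_reg_upper_gamma:
  "sabr_tail x0 \<beta> r =
     reg_upper_gamma (1 / (2 * (1 - \<beta>))) (x0 powr (2 * (1 - \<beta>)) / (2 * (1 - \<beta>)\<^sup>2) / r)"
  by (simp add: sabr_tail_def reg_upper_gamma_def mult_ac)

lemma P_inf_eq_mass_at_zero:
  "P_inf x0 y0 \<nu> \<beta> = y0 / (\<nu> * sqrt (2 * pi)) *
     mass_at_zero (1 / (2 * (1 - \<beta>))) (x0 powr (2 * (1 - \<beta>)) / (2 * (1 - \<beta>)\<^sup>2))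
       (y0\<^sup>2 / (2 * \<nu>\<^sup>2))"
  unfolding P_inf_def mass_at_zero_def
  by (simp add: sabr_tail_eq_reg_upper_gamma mult_ac)

lemma P_inf_n_eq_mass_at_zero_approx:
  "P_inf_n x0 y0 \<nu> \<beta> n = y0 / (\<nu> * sqrt (2 * pi)) *
     mass_at_zero_approx (1 / (2 * (1 - \<beta>))) (x0 powr (2 * (1 - \<beta>)) / (2 * (1 - \<beta>)\<^sup>2))
       (y0\<^sup>2 / (2 * \<nu>\<^sup>2)) n"
  unfolding P_inf_n_def mass_at_zero_approx_def set_integral_mult_right[symmetric]
  by (intro set_lebesgue_integral_cong) (auto simp: sabr_tail_eq_reg_upper_gamma powr_minus field_simps)

lemma exp_minus_mult_ln_inverse:
  fixes q :: real
  assumes "q > 0"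
  shows "exp (- real n * ln (1 / q)) = q ^ n"
  using assms by (simp add: ln_div exp_of_nat_mult)

theorem theorem2p5:
  fixes x0 y0 \<nu> \<beta> q :: real
  assumes "x0 > 0" and "y0 > 0" and "\<nu> > 0" and "0 \<le> \<beta>" and "\<beta> < 1"
    and q_def: "q = y0\<^sup>2 * (1 - \<beta>)\<^sup>2 / (\<nu>\<^sup>2 * x0 powr (2 * (1 - \<beta>)))"
  shows "((q > 1 \<or> (q = 1 \<and> 2/3 \<le> \<beta>)) \<longrightarrow> \<not> convergent (\<lambda>n. P_inf_n x0 y0 \<nu> \<beta> n))
     \<and> ((q < 1 \<or> (q = 1 \<and> \<beta> < 2/3)) \<longrightarrow>
           (\<lambda>n. P_inf x0 y0 \<nu> \<beta> - P_inf_n x0 y0 \<nu> \<beta> n)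
             \<in> O(\<lambda>n. real n powr (-1 + \<beta> / (2 - 2 * \<beta>)) * exp (- real n * ln (1 / q))))"
proof -
  define v A c K where "v = 1 / (2 * (1 - \<beta>))" and "A = x0 powr (2 * (1 - \<beta>)) / (2 * (1 - \<beta>)\<^sup>2)"
    and "c = y0\<^sup>2 / (2 * \<nu>\<^sup>2)" and "K = y0 / (\<nu> * sqrt (2 * pi))"
  have pos: "v > 0" "A > 0" "c > 0" "K \<noteq> 0"
    using assms by (simp_all add: v_def A_def c_def K_def)
  have q: "q = c / A"
    using assms by (simp add: q_def c_def A_def field_simps)
  have exponent: "-1 + \<beta> / (2 - 2 * \<beta>) = v - 3/2"
    and threshold: "2/3 \<le> \<beta> \<longleftrightarrow> v \<ge> 3/2"
    using assms by (simp_all add: v_def field_simps)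
  have approx: "P_inf_n x0 y0 \<nu> \<beta> = (\<lambda>n. K * mass_at_zero_approx v A c n)"
    unfolding v_def A_def c_def K_def by (intro ext P_inf_n_eq_mass_at_zero_approx)
  have limit: "P_inf x0 y0 \<nu> \<beta> = K * mass_at_zero v A c"
    unfolding v_def A_def c_def K_def by (rule P_inf_eq_mass_at_zero)
  \<comment> \<open>The O-bound holds for every \<open>q > 0\<close>; the hypothesis of (ii) makes it a decay estimate.\<close>
  show ?thesis
    unfolding approx limit right_diff_distrib[symmetric] exponent q threshold
      exp_minus_mult_ln_inverse[OF divide_pos_pos[OF pos(3,2)]]
      convergent_mult_const_iff[OF pos(4)] landau_o.big.cmult_in_iff[OF pos(4)]
    using mass_at_zero_approx_not_convergent[OF pos(1-3)] mass_at_zero_approx_error_bigo[OF pos(1-3)]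
    by blast
qed

end
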